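(* Let $H_0$ satisfy TQO-1 and TQO-2 with parameter $L^*$. Fix an integer $1\le r\le L^*$ and operators $V_{r,A}$, $A\in\mathcal S(r)$, each Hermitian and supported on $A$, with $V_{r,A}P=PV_{r,A}=0$ and $\|V_{r,A}\|\le w$. Let $W(r)=\sum_{A\in\mathcal S(r)}V_{r,A}$. Then there is a constant $C$ independent of $L$, $r$ and $w$ such that $$\|W(r)\psi\|\le C\,w\,r^2\,\|H_0\psi\|\quad\text{for all }\psi\in\mathcal H .$$
   Context: Lattice $\Lambda=\mathbb Z_L\times\mathbb Z_L$ (periodic), each site a qudit of fixed finite dimension, $\mathcal H=\bigotimes_u\mathcal H_u$. $\mathcal S(r)$: set of $r\times r$ square blocks. $H_0=\sum_{A\in\mathcal S(2)}Q_A$ with $Q_A$ pairwise commuting projectors supported on $A$; $P=\prod_{A\in\mathcal S(2)}(I-Q_A)\neq0$ is the ground-space projector (ground energy $0$). For $B\in\mathcal S(r)$: $P_B=\prod_{A\in\mathcal S(2),A\subseteq B}(I-Q_A)$, $Q_B=I-P_B$. TQO-1: for every $A\in\mathcal S(r)$, $r\le L^*$, and every $O_A$ supported on $A$, $PO_AP=cP$ for some $c\in\mathbb C$. TQO-2: for every $A\in\mathcal S(r)$, $r\le L^*$, with $B\in\mathcal S(r+2)$ the square containing $A$ and its nearest neighbours, $O_AP=0$ implies $O_AP_B=0$ for $O_A$ supported on $A$. *)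

theory Defs
  imports Complex_Main
begin

text \<open>Sites of the periodic lattice Z_L x Z_L are pairs (i,j) with i,j < L.
A basis configuration assigns to each site a qudit level < d (and 0 off the lattice).
Operators are matrices indexed by configurations, vectors are functions on configurations.\<close>

type_synonym cfg = "nat \<times> nat \<Rightarrow> nat"
type_synonym vec = "cfg \<Rightarrow> complex"
type_synonym op = "cfg \<Rightarrow> cfg \<Rightarrow> complex"

definition lattice :: "nat \<Rightarrow> (nat \<times> nat) set" where
  "lattice L = {0..<L} \<times> {0..<L}"

definition cfgs :: "nat \<Rightarrow> nat \<Rightarrow> cfg set" where
  "cfgs d L = {s. \<forall>u. (u \<in> lattice L \<longrightarrow> s u < d) \<and> (u \<notin> lattice L \<longrightarrow> s u = 0)}"

definition block :: "nat \<Rightarrow> nat \<Rightarrow> nat \<Rightarrow> nat \<Rightarrow> (nat \<times> nat) set" where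
  "block L x y r = {((x + i) mod L, (y + j) mod L) | i j. i < r \<and> j < r}"

definition squares :: "nat \<Rightarrow> nat \<Rightarrow> (nat \<times> nat) set set" where
  "squares L r = {block L x y r | x y. x < L \<and> y < L}"

definition square_list :: "nat \<Rightarrow> nat \<Rightarrow> (nat \<times> nat) set list" where
  "square_list L r = remdups [block L x y r. x \<leftarrow> [0..<L], y \<leftarrow> [0..<L]]"

definition idop :: op where
  "idop s t = (if s = t then 1 else 0)"

definition opmul :: "nat \<Rightarrow> nat \<Rightarrow> op \<Rightarrow> op \<Rightarrow> op" where
  "opmul d L A B = (\<lambda>s t. \<Sum>m\<in>cfgs d L. A s m * B m t)"

definition opapp :: "nat \<Rightarrow> nat \<Rightarrow> op \<Rightarrow> vec \<Rightarrow> vec" where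
  "opapp d L A \<psi> = (\<lambda>s. \<Sum>t\<in>cfgs d L. A s t * \<psi> t)"

text \<open>Ordered product of a list of operators (used only for pairwise commuting factors).\<close>
definition oprod :: "nat \<Rightarrow> nat \<Rightarrow> op list \<Rightarrow> op" where
  "oprod d L As = foldr (opmul d L) As idop"

definition opeq :: "nat \<Rightarrow> nat \<Rightarrow> op \<Rightarrow> op \<Rightarrow> bool" where
  "opeq d L A B \<longleftrightarrow> (\<forall>s\<in>cfgs d L. \<forall>t\<in>cfgs d L. A s t = B s t)"

definition zeroop :: op where
  "zeroop s t = 0"

definition hermitian :: "nat \<Rightarrow> nat \<Rightarrow> op \<Rightarrow> bool" where
  "hermitian d L A \<longleftrightarrow> (\<forall>s\<in>cfgs d L. \<forall>t\<in>cfgs d L. A s t = cnj (A t s))"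

definition projector :: "nat \<Rightarrow> nat \<Rightarrow> op \<Rightarrow> bool" where
  "projector d L A \<longleftrightarrow> hermitian d L A \<and> opeq d L (opmul d L A A) A"

definition vnorm :: "nat \<Rightarrow> nat \<Rightarrow> vec \<Rightarrow> real" where
  "vnorm d L \<psi> = sqrt (\<Sum>s\<in>cfgs d L. (cmod (\<psi> s))\<^sup>2)"

text \<open>O is supported on X: O = O_X \<otimes> I on the complement of X.\<close>
definition agree_off :: "(nat \<times> nat) set \<Rightarrow> cfg \<Rightarrow> cfg \<Rightarrow> bool" where
  "agree_off X s t \<longleftrightarrow> (\<forall>u. u \<notin> X \<longrightarrow> s u = t u)"

definition supported :: "nat \<Rightarrow> nat \<Rightarrow> (nat \<times> nat) set \<Rightarrow> op \<Rightarrow> bool" where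
  "supported d L X Op \<longleftrightarrow>
     (\<forall>s\<in>cfgs d L. \<forall>t\<in>cfgs d L. \<not> agree_off X s t \<longrightarrow> Op s t = 0) \<and>
     (\<forall>s\<in>cfgs d L. \<forall>t\<in>cfgs d L. \<forall>s'\<in>cfgs d L. \<forall>t'\<in>cfgs d L.
        agree_off X s t \<longrightarrow> agree_off X s' t' \<longrightarrow>
        (\<forall>u\<in>X. s u = s' u \<and> t u = t' u) \<longrightarrow> Op s t = Op s' t')"

definition compl_op :: "op \<Rightarrow> op" where
  "compl_op Q = (\<lambda>s t. idop s t - Q s t)"

definition ground_proj :: "nat \<Rightarrow> nat \<Rightarrow> ((nat \<times> nat) set \<Rightarrow> op) \<Rightarrow> op" where
  "ground_proj d L Q = oprod d L (map (\<lambda>A. compl_op (Q A)) (square_list L 2))"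

definition local_proj :: "nat \<Rightarrow> nat \<Rightarrow> ((nat \<times> nat) set \<Rightarrow> op) \<Rightarrow> (nat \<times> nat) set \<Rightarrow> op" where
  "local_proj d L Q B = oprod d L (map (\<lambda>A. compl_op (Q A)) (filter (\<lambda>A. A \<subseteq> B) (square_list L 2)))"

definition H0app :: "nat \<Rightarrow> nat \<Rightarrow> ((nat \<times> nat) set \<Rightarrow> op) \<Rightarrow> vec \<Rightarrow> vec" where
  "H0app d L Q \<psi> = (\<lambda>s. \<Sum>A\<in>squares L 2. opapp d L (Q A) \<psi> s)"

definition frustration_free_setup :: "nat \<Rightarrow> nat \<Rightarrow> ((nat \<times> nat) set \<Rightarrow> op) \<Rightarrow> bool" where
  "frustration_free_setup d L Q \<longleftrightarrow>
     (\<forall>A\<in>squares L 2. projector d L (Q A) \<and> supported d L A (Q A)) \<and>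
     (\<forall>A\<in>squares L 2. \<forall>B\<in>squares L 2. opeq d L (opmul d L (Q A) (Q B)) (opmul d L (Q B) (Q A))) \<and>
     \<not> opeq d L (ground_proj d L Q) zeroop"

definition TQO1 :: "nat \<Rightarrow> nat \<Rightarrow> ((nat \<times> nat) set \<Rightarrow> op) \<Rightarrow> nat \<Rightarrow> bool" where
  "TQO1 d L Q Lstar \<longleftrightarrow>
     (\<forall>r'. 1 \<le> r' \<and> r' \<le> Lstar \<longrightarrow> (\<forall>A\<in>squares L r'. \<forall>Op. supported d L A Op \<longrightarrow>
        (\<exists>c::complex. opeq d L
           (opmul d L (ground_proj d L Q) (opmul d L Op (ground_proj d L Q)))
           (\<lambda>s t. c * ground_proj d L Q s t))))"

text \<open>For A = block x y r', the square containing A and its nearest neighbours is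
  the (r'+2) x (r'+2) square with corner (x-1, y-1) (mod L).\<close>
definition TQO2 :: "nat \<Rightarrow> nat \<Rightarrow> ((nat \<times> nat) set \<Rightarrow> op) \<Rightarrow> nat \<Rightarrow> bool" where
  "TQO2 d L Q Lstar \<longleftrightarrow>
     (\<forall>r'. 1 \<le> r' \<and> r' \<le> Lstar \<longrightarrow> (\<forall>x<L. \<forall>y<L. \<forall>Op.
        supported d L (block L x y r') Op \<longrightarrow>
        opeq d L (opmul d L Op (ground_proj d L Q)) zeroop \<longrightarrow>
        opeq d L (opmul d L Op (local_proj d L Q (block L ((x + L - 1) mod L) ((y + L - 1) mod L) (r' + 2)))) zeroop))"

end

theory Submission
  imports Defs "HOL-Library.Function_Algebras" "HOL-Library.Multiset" "HOL-Analysis.L2_Norm"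
begin

(*
  Colour the squares A in S(r) with 4(r+2)^2 colours so that distinct squares of one colour
  have disjoint enlargements B_A (the (r+2)-square around A appearing in TQO-2).  For one
  colour class K put P_A = P_{B_A} and R_A = I - P_A.
  (1) TQO-2 turns V_A P = 0 into V_A P_A = 0; as V_A and P_A are self-adjoint, also
      P_A V_A = 0, so V_A = R_A V_A = V_A R_A.  For A' <> A in K the operator V_A commutes
      with R_A', because they act on disjoint sites.  An inequality for such families of
      commuting projections gives ||sum_K V_A psi|| <= w ||sum_K R_A psi||.
  (2) R_A = I - prod_{j in B_A} (I - Q_j), where the 2-squares j inside the B_A (A in K) are
      pairwise distinct; a second inequality for commuting projections gives
      ||sum_K R_A psi|| <= ||sum_j Q_j psi|| = ||H_0 psi||.
  Both inequalities are proved by splitting psi along one projection at a time (Pythagoras).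
  Summing over the colours gives the theorem with C = 36.
*)

lemma sum_fun_apply: "(\<Sum>i\<in>I. (f i :: 'a \<Rightarrow> 'b::comm_monoid_add)) x = (\<Sum>i\<in>I. f i x)"
  by (induction I rule: infinite_finite_induct) auto

lemma finite_cfgs: "finite (cfgs d L)"
proof -
  have "cfgs d L = {s. \<forall>u. (u \<in> lattice L \<longrightarrow> s u \<in> {..<d}) \<and> (u \<notin> lattice L \<longrightarrow> s u = 0)}"
    unfolding cfgs_def by auto
  moreover have "finite (lattice L)" unfolding lattice_def by auto
  ultimately show ?thesis using finite_set_of_finite_funs[of "lattice L" "{..<d}" 0] by simp
qed

text \<open>Vectors are only meaningful on the configuration space S = cfgs d L.\<close>

locale qudit_space = fixes d L :: nat
begin

abbreviation S :: "cfg set" where "S \<equiv> cfgs d L"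
abbreviation nrm :: "vec \<Rightarrow> real" where "nrm \<equiv> vnorm d L"

definition restr :: "vec \<Rightarrow> vec" where "restr \<psi> = (\<lambda>s. if s \<in> S then \<psi> s else 0)"
definition act :: "op \<Rightarrow> vec \<Rightarrow> vec" where "act A \<psi> = restr (opapp d L A \<psi>)"
definition smul :: "complex \<Rightarrow> vec \<Rightarrow> vec" where "smul c \<psi> = restr (\<lambda>s. c * \<psi> s)"
definition inner :: "vec \<Rightarrow> vec \<Rightarrow> complex" where "inner \<phi> \<psi> = (\<Sum>s\<in>S. cnj (\<phi> s) * \<psi> s)"

text \<open>Linear maps of the Hilbert space, represented on all vectors: they ignore and
  produce nothing outside S.\<close>
definition lmap :: "(vec \<Rightarrow> vec) \<Rightarrow> bool" where
  "lmap f \<longleftrightarrow> (\<forall>a b. f (a + b) = f a + f b) \<and> (\<forall>c a. f (smul c a) = smul c (f a)) \<and>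
     (\<forall>a. f (restr a) = f a) \<and> (\<forall>a. restr (f a) = f a)"

definition selfadj :: "(vec \<Rightarrow> vec) \<Rightarrow> bool" where
  "selfadj f \<longleftrightarrow> (\<forall>\<phi> \<psi>. inner (f \<phi>) \<psi> = inner \<phi> (f \<psi>))"

definition idem :: "(vec \<Rightarrow> vec) \<Rightarrow> bool" where
  "idem f \<longleftrightarrow> (\<forall>\<phi>. f (f \<phi>) = f \<phi>)"

definition commute :: "(vec \<Rightarrow> vec) \<Rightarrow> (vec \<Rightarrow> vec) \<Rightarrow> bool" where
  "commute f g \<longleftrightarrow> (\<forall>\<phi>. f (g \<phi>) = g (f \<phi>))"

definition oproj :: "(vec \<Rightarrow> vec) \<Rightarrow> bool" where
  "oproj R \<longleftrightarrow> lmap R \<and> selfadj R \<and> idem R"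

lemma restr_restr [simp]: "restr (restr a) = restr a" by (auto simp: restr_def)
lemma restr_add: "restr (a + b) = restr a + restr b" by (auto simp: restr_def)
lemma restr_diff: "restr (a - b) = restr a - restr b" by (auto simp: restr_def)
lemma smul_add: "smul c (a + b) = smul c a + smul c b"
  by (auto simp: smul_def restr_def algebra_simps)
lemma smul_diff: "smul c (a - b) = smul c a - smul c b"
  by (auto simp: smul_def restr_def algebra_simps)
lemma smul_zero [simp]: "smul 0 a = 0" by (auto simp: smul_def restr_def)
lemma smul_one_plus: "smul (1 + c) a = restr a + smul c a"
  by (auto simp: smul_def restr_def algebra_simps)

lemma lmapD:
  assumes "lmap f"
  shows "f (a + b) = f a + f b" "f (smul c a) = smul c (f a)" "f (restr a) = f a" "restr (f a) = f a"
  using assms by (auto simp: lmap_def)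

lemma lmap_diff: "lmap f \<Longrightarrow> f (a - b) = f a - f b"
  by (metis diff_add_cancel eq_diff_eq lmapD(1))

lemma lmap_zero: "lmap f \<Longrightarrow> f 0 = 0"
  using lmap_diff[of f 0 0] by simp

lemma lmap_sum: "lmap f \<Longrightarrow> f (\<Sum>i\<in>I. g i) = (\<Sum>i\<in>I. f (g i))"
  by (induction I rule: infinite_finite_induct) (auto simp: lmap_zero lmapD(1))

lemma lmap_sum_list: "lmap f \<Longrightarrow> f (sum_list (map g xs)) = sum_list (map (\<lambda>x. f (g x)) xs)"
  by (induction xs) (auto simp: lmapD(1) lmap_zero)

lemma lmap_restr: "lmap restr"
  by (auto simp: lmap_def restr_add restr_def smul_def)

lemma lmap_zero_map: "lmap (\<lambda>\<phi>. 0)"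
  by (auto simp: lmap_def restr_def smul_def fun_eq_iff)

lemma lmap_add_map: "lmap f \<Longrightarrow> lmap g \<Longrightarrow> lmap (\<lambda>\<phi>. f \<phi> + g \<phi>)"
  unfolding lmap_def by (simp add: restr_add smul_add algebra_simps)

lemma lmap_diff_map: "lmap f \<Longrightarrow> lmap g \<Longrightarrow> lmap (\<lambda>\<phi>. f \<phi> - g \<phi>)"
  unfolding lmap_def by (simp add: restr_add restr_diff smul_diff algebra_simps)

lemma lmap_comp: "lmap f \<Longrightarrow> lmap g \<Longrightarrow> lmap (\<lambda>\<phi>. f (g \<phi>))"
  unfolding lmap_def by simp

lemma commute_sym: "commute f g \<Longrightarrow> commute g f"
  unfolding commute_def by simp

lemma inner_add_right: "inner \<phi> (a + b) = inner \<phi> a + inner \<phi> b"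
  unfolding inner_def by (simp add: algebra_simps sum.distrib)
lemma inner_add_left: "inner (a + b) \<phi> = inner a \<phi> + inner b \<phi>"
  unfolding inner_def by (simp add: algebra_simps sum.distrib)
lemma inner_diff_right: "inner \<phi> (a - b) = inner \<phi> a - inner \<phi> b"
  unfolding inner_def by (simp add: algebra_simps sum_subtractf)
lemma inner_diff_left: "inner (a - b) \<phi> = inner a \<phi> - inner b \<phi>"
  unfolding inner_def by (simp add: algebra_simps sum_subtractf)
lemma inner_zero_right [simp]: "inner \<phi> 0 = 0" unfolding inner_def by simp
lemma inner_zero_left [simp]: "inner 0 \<phi> = 0" unfolding inner_def by simp
lemma inner_restr_right [simp]: "inner \<phi> (restr \<psi>) = inner \<phi> \<psi>" unfolding inner_def restr_def by simp
lemma inner_restr_left [simp]: "inner (restr \<phi>) \<psi> = inner \<phi> \<psi>" unfolding inner_def restr_def by simp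
lemma inner_commute: "inner b a = cnj (inner a b)" unfolding inner_def by (simp add: mult.commute)

lemma nrm_cong: "(\<And>s. s \<in> S \<Longrightarrow> f s = g s) \<Longrightarrow> nrm f = nrm g"
  unfolding vnorm_def by simp

lemma nrm_restr [simp]: "nrm (restr f) = nrm f" by (rule nrm_cong) (simp add: restr_def)
lemma nrm_nonneg: "0 \<le> nrm f" unfolding vnorm_def by (simp add: sum_nonneg)
lemma nrm_zero [simp]: "nrm 0 = 0" unfolding vnorm_def by simp

lemma nrm_smul: "nrm (smul c f) = cmod c * nrm f"
  unfolding vnorm_def smul_def restr_def
  by (simp add: norm_mult power_mult_distrib sum_distrib_left[symmetric] real_sqrt_mult)

lemma nrm_triangle: "nrm (a + b) \<le> nrm a + nrm b"
proof -
  have "nrm (a + b) \<le> L2_set (\<lambda>s. cmod (a s) + cmod (b s)) S"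
    unfolding vnorm_def L2_set_def[symmetric] by (rule L2_set_mono) (auto simp: norm_triangle_ineq)
  also have "\<dots> \<le> nrm a + nrm b"
    unfolding vnorm_def L2_set_def[symmetric] by (rule L2_set_triangle_ineq)
  finally show ?thesis .
qed

lemma nrm_sum: "nrm (\<Sum>i\<in>I. f i) \<le> (\<Sum>i\<in>I. nrm (f i))"
proof (induction I rule: infinite_finite_induct)
  case (insert x F)
  have "nrm (sum f (insert x F)) = nrm (f x + sum f F)" using insert(1,2) by simp
  also have "\<dots> \<le> nrm (f x) + nrm (sum f F)" by (rule nrm_triangle)
  also have "\<dots> \<le> (\<Sum>i\<in>insert x F. nrm (f i))" using insert by simp
  finally show ?case .
qed (auto simp: vnorm_def)

lemma nrm_sq: "(nrm f)\<^sup>2 = Re (inner f f)"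
proof -
  have "Re (cnj (f s) * f s) = (cmod (f s))\<^sup>2" for s
    using complex_norm_square[of "f s"] by (metis Re_complex_of_real mult.commute)
  then show ?thesis unfolding vnorm_def inner_def by (simp add: sum_nonneg)
qed

lemma inner_all_zero:
  assumes "\<And>\<chi>. inner \<chi> \<phi> = 0" shows "restr \<phi> = 0"
proof -
  have "(nrm \<phi>)\<^sup>2 = 0" using assms[of \<phi>] by (simp add: nrm_sq)
  then have "\<forall>s\<in>S. cmod (\<phi> s) = 0"
    unfolding vnorm_def by (simp add: finite_cfgs sum_nonneg_eq_0_iff sum_nonneg)
  then show ?thesis unfolding restr_def by (auto simp: fun_eq_iff)
qed

lemma nrm_add_sq: "(nrm (a + b))\<^sup>2 = (nrm a)\<^sup>2 + (nrm b)\<^sup>2 + 2 * Re (inner a b)"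
proof -
  have "inner (a + b) (a + b) = inner a a + inner b b + inner a b + cnj (inner a b)"
    using inner_commute[of a b] by (simp add: inner_add_left inner_add_right)
  then show ?thesis by (simp add: nrm_sq)
qed

lemma pythagoras:
  assumes "oproj R"
  shows "(nrm \<phi>)\<^sup>2 = (nrm (R \<phi>))\<^sup>2 + (nrm (\<phi> - R \<phi>))\<^sup>2"
proof -
  have R: "lmap R" "selfadj R" "idem R" using assms by (auto simp: oproj_def)
  have "R (\<phi> - R \<phi>) = 0" using R(3) by (simp add: lmap_diff[OF R(1)] idem_def)
  then have orth: "inner (R \<phi>) (\<phi> - R \<phi>) = 0"
    using R(2) unfolding selfadj_def by (metis inner_zero_right)
  have "R \<phi> + (\<phi> - R \<phi>) = \<phi>" by simp
  then show ?thesis using nrm_add_sq[of "R \<phi>" "\<phi> - R \<phi>"] orth by simp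
qed

lemma nrm_le_by_split:
  assumes R: "oproj R" and c: "0 \<le> c"
    and F: "\<And>x y. F (x - y) = F x - F y" "\<And>x. R (F x) = F (R x)"
    and H: "\<And>x y. H (x - y) = H x - H y" "\<And>x. R (H x) = H (R x)"
    and on_range: "nrm (F (R \<psi>)) \<le> c * nrm (H (R \<psi>))"
    and on_kernel: "nrm (F (\<psi> - R \<psi>)) \<le> c * nrm (H (\<psi> - R \<psi>))"
  shows "nrm (F \<psi>) \<le> c * nrm (H \<psi>)"
proof -
  have split: "(nrm (G \<psi>))\<^sup>2 = (nrm (G (R \<psi>)))\<^sup>2 + (nrm (G (\<psi> - R \<psi>)))\<^sup>2"
    if "\<And>x y. G (x - y) = G x - G y" "\<And>x. R (G x) = G (R x)" for G
    using pythagoras[OF R, of "G \<psi>"] that by simp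
  have "(nrm (F \<psi>))\<^sup>2 = (nrm (F (R \<psi>)))\<^sup>2 + (nrm (F (\<psi> - R \<psi>)))\<^sup>2"
    by (rule split[of F, OF F])
  also have "\<dots> \<le> (c * nrm (H (R \<psi>)))\<^sup>2 + (c * nrm (H (\<psi> - R \<psi>)))\<^sup>2"
    using on_range on_kernel nrm_nonneg by (intro add_mono power_mono) auto
  also have "\<dots> = c\<^sup>2 * ((nrm (H (R \<psi>)))\<^sup>2 + (nrm (H (\<psi> - R \<psi>)))\<^sup>2)"
    by (simp add: power_mult_distrib algebra_simps)
  also have "\<dots> = (c * nrm (H \<psi>))\<^sup>2"
    by (simp only: split[of H, OF H, symmetric] power_mult_distrib)
  finally show ?thesis by (rule power2_le_imp_le) (simp add: c nrm_nonneg)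
qed

definition compl :: "(vec \<Rightarrow> vec) \<Rightarrow> vec \<Rightarrow> vec" where
  "compl R \<psi> = restr \<psi> - R \<psi>"

lemma lmap_compl: "lmap R \<Longrightarrow> lmap (compl R)"
  unfolding compl_def by (rule lmap_diff_map[OF lmap_restr])

lemma selfadj_compl: "selfadj R \<Longrightarrow> selfadj (compl R)"
  unfolding selfadj_def compl_def by (simp add: inner_diff_left inner_diff_right)

lemma idem_compl: "lmap R \<Longrightarrow> idem R \<Longrightarrow> idem (compl R)"
  unfolding idem_def compl_def by (simp add: lmap_diff lmapD(3,4) restr_diff fun_eq_iff)

lemma oproj_compl: "oproj R \<Longrightarrow> oproj (compl R)"
  unfolding oproj_def by (simp add: lmap_compl selfadj_compl idem_compl)

lemma oproj_parts:
  assumes "oproj R"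
  shows "R (R \<psi>) = R \<psi>" "restr (R \<psi>) = R \<psi>" "R (\<psi> - R \<psi>) = 0"
  using assms by (auto simp: oproj_def idem_def lmapD(4) lmap_diff fun_eq_iff)

lemma commute_compl: "lmap h \<Longrightarrow> commute h R \<Longrightarrow> commute h (compl R)"
  unfolding commute_def compl_def by (simp add: lmap_diff lmapD(3,4) fun_eq_iff)

lemma oproj_comp:
  assumes A: "oproj A" and B: "oproj B" and AB: "commute A B"
  shows "oproj (\<lambda>\<phi>. A (B \<phi>))"
  unfolding oproj_def
proof (intro conjI)
  show "lmap (\<lambda>\<phi>. A (B \<phi>))" using A B by (simp add: oproj_def lmap_comp)
  show "selfadj (\<lambda>\<phi>. A (B \<phi>))"
    unfolding selfadj_def
  proof (intro allI)
    fix \<phi> \<psi>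
    have sA: "selfadj A" and sB: "selfadj B" using A B by (auto simp: oproj_def)
    have "inner (A (B \<phi>)) \<psi> = inner \<phi> (B (A \<psi>))"
      using sA sB unfolding selfadj_def by simp
    then show "inner (A (B \<phi>)) \<psi> = inner \<phi> (A (B \<psi>))"
      using AB unfolding commute_def by simp
  qed
  show "idem (\<lambda>\<phi>. A (B \<phi>))"
    unfolding idem_def
  proof
    fix \<phi>
    have "A (B (A (B \<phi>))) = A (A (B (B \<phi>)))" using AB unfolding commute_def by simp
    then show "A (B (A (B \<phi>))) = A (B \<phi>)" using A B by (simp add: oproj_def idem_def)
  qed
qed

lemma selfadj_comp_zero:
  assumes f: "selfadj f" and g: "selfadj g" "lmap g" and fg: "\<And>\<phi>. f (g \<phi>) = 0"
  shows "g (f \<phi>) = 0"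
proof -
  have "restr (g (f \<phi>)) = 0"
  proof (rule inner_all_zero)
    fix \<chi>
    have "inner \<chi> (g (f \<phi>)) = inner (f (g \<chi>)) \<phi>"
      using f g(1) unfolding selfadj_def by simp
    then show "inner \<chi> (g (f \<phi>)) = 0" by (simp add: fg)
  qed
  then show ?thesis by (simp add: lmapD(4)[OF g(2)])
qed

primrec cprod :: "('j \<Rightarrow> vec \<Rightarrow> vec) \<Rightarrow> 'j list \<Rightarrow> vec \<Rightarrow> vec" where
  "cprod q [] = restr"
| "cprod q (j # l) = (\<lambda>\<psi>. compl (q j) (cprod q l \<psi>))"

lemma lmap_cprod: "\<forall>i\<in>set l. lmap (q i) \<Longrightarrow> lmap (cprod q l)"
proof (induction l)
  case (Cons j l)
  then show ?case by (simp add: lmap_comp lmap_compl)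
qed (simp add: lmap_restr)

lemma commute_cprod:
  assumes "lmap h" "\<forall>i\<in>set l. lmap (q i) \<and> commute h (q i)"
  shows "commute h (cprod q l)"
  using assms(2)
proof (induction l)
  case Nil
  show ?case using assms(1) by (simp add: commute_def lmapD(3,4))
next
  case (Cons j l)
  then have "commute h (compl (q j))" using commute_compl[OF assms(1)] by simp
  with Cons show ?case by (simp add: commute_def)
qed

lemma oproj_cprod:
  assumes "\<forall>i\<in>set l. oproj (q i)" "\<forall>i\<in>set l. \<forall>i'\<in>set l. commute (q i) (q i')"
  shows "oproj (cprod q l)"
  using assms
proof (induction l)
  case Nil
  show ?case using lmap_restr by (simp add: oproj_def selfadj_def idem_def)
next
  case (Cons j l)
  have lm: "\<forall>i\<in>set l. lmap (q i)" and qj: "oproj (q j)" using Cons.prems by (auto simp: oproj_def)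
  have "commute (q j) (cprod q l)"
    using Cons.prems qj lm by (intro commute_cprod) (auto simp: oproj_def)
  then have "commute (compl (q j)) (cprod q l)"
    by (rule commute_sym[OF commute_compl[OF lmap_cprod[OF lm] commute_sym]])
  moreover have "oproj (cprod q l)" using Cons by simp
  ultimately show ?case using oproj_comp[OF oproj_compl[OF qj]] by simp
qed

lemma lmap_smul: "lmap (smul c)"
  by (auto simp: lmap_def smul_def restr_def fun_eq_iff algebra_simps)

lemma lmap_sum_map: "\<forall>i\<in>I. lmap (f i) \<Longrightarrow> lmap (\<lambda>\<phi>. \<Sum>i\<in>I. f i \<phi>)"
proof (induction I rule: infinite_finite_induct)
  case (insert x F)
  have "(\<lambda>\<phi>. \<Sum>i\<in>insert x F. f i \<phi>) = (\<lambda>\<phi>. f x \<phi> + (\<Sum>i\<in>F. f i \<phi>))"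
    using insert(1,2) by simp
  then show ?case using insert lmap_add_map[of "f x" "\<lambda>\<phi>. \<Sum>i\<in>F. f i \<phi>"] by (simp only:) simp
qed (simp_all add: lmap_zero_map)

lemma lmap_sum_list_map: "\<forall>x\<in>set xs. lmap (f x) \<Longrightarrow> lmap (\<lambda>\<phi>. sum_list (map (\<lambda>x. f x \<phi>) xs))"
proof (induction xs)
  case (Cons x xs)
  have "(\<lambda>\<phi>. sum_list (map (\<lambda>y. f y \<phi>) (x # xs))) = (\<lambda>\<phi>. f x \<phi> + sum_list (map (\<lambda>y. f y \<phi>) xs))"
    by simp
  then show ?case
    using Cons lmap_add_map[of "f x" "\<lambda>\<phi>. sum_list (map (\<lambda>y. f y \<phi>) xs)"] by (simp only:) simp
qed (simp add: lmap_zero_map)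

lemma commute_add_map: "lmap h \<Longrightarrow> commute h f \<Longrightarrow> commute h g \<Longrightarrow> commute h (\<lambda>\<phi>. f \<phi> + g \<phi>)"
  unfolding commute_def by (simp add: lmapD(1) fun_eq_iff)

lemma commute_smul: "lmap h \<Longrightarrow> commute h (smul c)"
  unfolding commute_def by (simp add: lmapD(2))

lemma commute_sum_map: "lmap h \<Longrightarrow> \<forall>i\<in>I. commute h (f i) \<Longrightarrow> commute h (\<lambda>\<phi>. \<Sum>i\<in>I. f i \<phi>)"
  unfolding commute_def by (simp add: lmap_sum)

lemma commute_sum_list_map:
  "lmap h \<Longrightarrow> \<forall>x\<in>set xs. commute h (f x) \<Longrightarrow> commute h (\<lambda>\<phi>. sum_list (map (\<lambda>x. f x \<phi>) xs))"
  unfolding commute_def by (simp add: lmap_sum_list cong: map_cong)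

definition dominated_family ::
  "real \<Rightarrow> ('i \<Rightarrow> vec \<Rightarrow> vec) \<Rightarrow> ('i \<Rightarrow> vec \<Rightarrow> vec) \<Rightarrow> 'i set \<Rightarrow> bool" where
  "dominated_family w R V I \<longleftrightarrow>
     (\<forall>i\<in>I. oproj (R i)) \<and> (\<forall>i\<in>I. \<forall>j\<in>I. commute (R i) (R j)) \<and>
     (\<forall>i\<in>I. lmap (V i) \<and> (\<forall>\<phi>. V i (R i \<phi>) = V i \<phi>) \<and> (\<forall>\<phi>. R i (V i \<phi>) = V i \<phi>) \<and>
        (\<forall>\<phi>. nrm (V i \<phi>) \<le> w * nrm \<phi>)) \<and>
     (\<forall>i\<in>I. \<forall>j\<in>I. i \<noteq> j \<longrightarrow> commute (V i) (R j))"

lemma dominated_family_subset: "dominated_family w R V I \<Longrightarrow> J \<subseteq> I \<Longrightarrow> dominated_family w R V J"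
  unfolding dominated_family_def by blast

lemma dominated_sides:
  assumes fam: "dominated_family w R V I" and k: "k \<in> I" and U: "lmap U" "commute (R k) U"
  shows "lmap (\<lambda>\<phi>. (\<Sum>i\<in>I. V i \<phi>) + U \<phi>)" "commute (R k) (\<lambda>\<phi>. (\<Sum>i\<in>I. V i \<phi>) + U \<phi>)"
    "lmap (\<lambda>\<phi>. (\<Sum>i\<in>I. R i \<phi>) + smul c \<phi>)" "commute (R k) (\<lambda>\<phi>. (\<Sum>i\<in>I. R i \<phi>) + smul c \<phi>)"
proof -
  note fam = fam[unfolded dominated_family_def]
  have lmRk: "lmap (R k)" using fam k by (auto simp: oproj_def)
  show "lmap (\<lambda>\<phi>. (\<Sum>i\<in>I. V i \<phi>) + U \<phi>)" using fam U by (intro lmap_add_map lmap_sum_map) auto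
  show "lmap (\<lambda>\<phi>. (\<Sum>i\<in>I. R i \<phi>) + smul c \<phi>)"
    using fam by (intro lmap_add_map lmap_sum_map lmap_smul) (auto simp: oproj_def)
  show "commute (R k) (\<lambda>\<phi>. (\<Sum>i\<in>I. R i \<phi>) + smul c \<phi>)"
    using fam k by (intro commute_add_map commute_sum_map commute_smul lmRk) auto
  show "commute (R k) (\<lambda>\<phi>. (\<Sum>i\<in>I. V i \<phi>) + U \<phi>)"
  proof (intro commute_add_map commute_sum_map lmRk ballI U(2))
    fix i assume "i \<in> I"
    then show "commute (R k) (V i)"
      using fam k by (cases "i = k") (auto simp: commute_def)
  qed
qed

lemma dominated_absorb:
  assumes fam: "dominated_family w R V (insert k I)" and k: "k \<notin> I"
    and U: "lmap U" "\<forall>i\<in>I. commute (R i) U" "\<forall>\<phi>. nrm (U \<phi>) \<le> c * w * nrm \<phi>"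
  shows "lmap (\<lambda>\<phi>. V k \<phi> + U \<phi>)" "\<forall>i\<in>I. commute (R i) (\<lambda>\<phi>. V k \<phi> + U \<phi>)"
    "\<forall>\<phi>. nrm (V k \<phi> + U \<phi>) \<le> (c + 1) * w * nrm \<phi>"
proof -
  note fam = fam[unfolded dominated_family_def]
  show "lmap (\<lambda>\<phi>. V k \<phi> + U \<phi>)" using fam U(1) by (intro lmap_add_map) auto
  show "\<forall>i\<in>I. commute (R i) (\<lambda>\<phi>. V k \<phi> + U \<phi>)"
  proof
    fix i assume i: "i \<in> I"
    then have "commute (V k) (R i)" using fam k by auto
    moreover have "lmap (R i)" using fam i by (auto simp: oproj_def)
    ultimately show "commute (R i) (\<lambda>\<phi>. V k \<phi> + U \<phi>)"
      using U(2) i by (intro commute_add_map) (auto dest: commute_sym)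
  qed
  show "\<forall>\<phi>. nrm (V k \<phi> + U \<phi>) \<le> (c + 1) * w * nrm \<phi>"
  proof
    fix \<phi>
    have "nrm (V k \<phi> + U \<phi>) \<le> w * nrm \<phi> + c * w * nrm \<phi>"
      using nrm_triangle[of "V k \<phi>" "U \<phi>"] fam U(3) by (smt (verit) insertI1)
    then show "nrm (V k \<phi> + U \<phi>) \<le> (c + 1) * w * nrm \<phi>" by (simp add: algebra_simps)
  qed
qed

text \<open>Generalised form for the induction over I: U collects the V_i of the indices already
  split off along the range of R_i, and c counts them.  Splitting \<psi> along R_k, on the range of
  R_k the operator V_k joins U and R_k adds one copy of \<psi>; on the kernel both vanish.\<close>
lemma dominated_sum_bound_gen:
  assumes "finite I" "dominated_family w R V I" "0 \<le> w" "0 \<le> c"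
    and "lmap U" "\<forall>i\<in>I. commute (R i) U" "\<forall>\<phi>. nrm (U \<phi>) \<le> c * w * nrm \<phi>"
  shows "nrm ((\<Sum>i\<in>I. V i \<psi>) + U \<psi>) \<le> w * nrm ((\<Sum>i\<in>I. R i \<psi>) + smul (of_real c) \<psi>)"
  using assms(1,2,4-7)
proof (induction I arbitrary: U c \<psi> rule: finite_induct)
  case empty
  then show ?case using assms(3) by (simp add: nrm_smul mult.assoc mult.left_commute)
next
  case (insert k I)
  have famI: "dominated_family w R V I" using insert.prems(1) by (rule dominated_family_subset) auto
  have Rk: "oproj (R k)" and Vk: "lmap (V k)" "\<And>\<phi>. V k (R k \<phi>) = V k \<phi>"
    using insert.prems(1) by (auto simp: dominated_family_def)
  define X where "X = (\<lambda>\<phi>. (\<Sum>i\<in>insert k I. V i \<phi>) + U \<phi>)"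
  define Y where "Y = (\<lambda>\<phi>. (\<Sum>i\<in>insert k I. R i \<phi>) + smul (of_real c) \<phi>)"
  have sides: "lmap X" "commute (R k) X" "lmap Y" "commute (R k) Y"
    unfolding X_def Y_def using dominated_sides[OF insert.prems(1) insertI1 insert.prems(3)]
      insert.prems(4) by auto
  have "nrm (X \<psi>) \<le> w * nrm (Y \<psi>)"
  proof (rule nrm_le_by_split[OF Rk assms(3), where F = X and H = Y])
    show "X (x - y) = X x - X y" "Y (x - y) = Y x - Y y" for x y
      by (rule lmap_diff[OF sides(1)], rule lmap_diff[OF sides(3)])
    show "R k (X x) = X (R k x)" "R k (Y x) = Y (R k x)" for x
      using sides by (simp_all add: commute_def)
    have "nrm ((\<Sum>i\<in>I. V i (R k \<psi>)) + (\<lambda>\<phi>. V k \<phi> + U \<phi>) (R k \<psi>))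
        \<le> w * nrm ((\<Sum>i\<in>I. R i (R k \<psi>)) + smul (of_real (c + 1)) (R k \<psi>))"
      using insert.prems(2)
      by (intro insert.IH[OF famI _ dominated_absorb[OF insert.prems(1) insert(2) insert.prems(3) _
            insert.prems(5)]]) (use insert.prems(4) in auto)
    then show "nrm (X (R k \<psi>)) \<le> w * nrm (Y (R k \<psi>))"
      unfolding X_def Y_def using insert(1,2) oproj_parts[OF Rk]
      by (simp add: smul_one_plus algebra_simps)
    have "V k (\<psi> - R k \<psi>) = 0" using Vk by (simp add: lmap_diff fun_eq_iff)
    moreover have "nrm ((\<Sum>i\<in>I. V i (\<psi> - R k \<psi>)) + U (\<psi> - R k \<psi>))
        \<le> w * nrm ((\<Sum>i\<in>I. R i (\<psi> - R k \<psi>)) + smul (of_real c) (\<psi> - R k \<psi>))"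
      by (rule insert.IH[OF famI]) (use insert.prems in auto)
    ultimately show "nrm (X (\<psi> - R k \<psi>)) \<le> w * nrm (Y (\<psi> - R k \<psi>))"
      unfolding X_def Y_def using insert(1,2) oproj_parts(3)[OF Rk] by simp
  qed
  then show ?case unfolding X_def Y_def .
qed

lemma dominated_sum_bound:
  assumes "finite I" "dominated_family w R V I" "0 \<le> w"
  shows "nrm (\<Sum>i\<in>I. V i \<psi>) \<le> w * nrm (\<Sum>i\<in>I. R i \<psi>)"
proof -
  have "\<forall>i\<in>I. commute (R i) (\<lambda>\<phi>. 0)"
    using assms(2) by (auto simp: commute_def dominated_family_def oproj_def lmap_zero)
  then have "nrm ((\<Sum>i\<in>I. V i \<psi>) + 0) \<le> w * nrm ((\<Sum>i\<in>I. R i \<psi>) + smul (of_real 0) \<psi>)"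
    using dominated_sum_bound_gen[OF assms, of 0 "\<lambda>\<phi>. 0"] lmap_zero_map by simp
  then show ?thesis by simp
qed

text \<open>Both sides carry an extra
  multiple of the identity for the induction.\<close>

definition compl_sum :: "('j \<Rightarrow> vec \<Rightarrow> vec) \<Rightarrow> 'j list list \<Rightarrow> complex \<Rightarrow> vec \<Rightarrow> vec" where
  "compl_sum q Ls a \<psi> = sum_list (map (\<lambda>l. compl (cprod q l) \<psi>) Ls) + smul a \<psi>"

definition proj_sum :: "('j \<Rightarrow> vec \<Rightarrow> vec) \<Rightarrow> 'j list \<Rightarrow> complex \<Rightarrow> vec \<Rightarrow> vec" where
  "proj_sum q js b \<psi> = sum_list (map (\<lambda>j. q j \<psi>) js) + smul b \<psi>"

lemma lmap_compl_sum: "\<forall>i\<in>set (concat Ls). lmap (q i) \<Longrightarrow> lmap (compl_sum q Ls a)"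
  unfolding compl_sum_def[abs_def]
  by (intro lmap_add_map lmap_smul lmap_sum_list_map ballI lmap_compl lmap_cprod) auto

lemma lmap_proj_sum: "\<forall>i\<in>set js. lmap (q i) \<Longrightarrow> lmap (proj_sum q js b)"
  unfolding proj_sum_def[abs_def] by (intro lmap_add_map lmap_smul lmap_sum_list_map)

lemma commute_compl_sum:
  assumes "lmap h" "\<forall>i\<in>set (concat Ls). lmap (q i) \<and> commute h (q i)"
  shows "commute h (compl_sum q Ls a)"
  unfolding compl_sum_def[abs_def] using assms
  by (intro commute_add_map commute_smul commute_sum_list_map ballI commute_compl commute_cprod) auto

lemma commute_proj_sum: "lmap h \<Longrightarrow> \<forall>i\<in>set js. commute h (q i) \<Longrightarrow> commute h (proj_sum q js b)"
  unfolding proj_sum_def[abs_def] by (intro commute_add_map commute_smul commute_sum_list_map)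

lemma proj_sum_fixed:
  "j \<in> set js \<Longrightarrow> q j \<psi> = \<psi> \<Longrightarrow> restr \<psi> = \<psi> \<Longrightarrow>
   proj_sum q js b \<psi> = proj_sum q (remove1 j js) (1 + b) \<psi>"
  unfolding proj_sum_def by (simp add: sum_list_map_remove1 smul_one_plus algebra_simps)

lemma proj_sum_killed:
  "j \<in> set js \<Longrightarrow> q j \<psi> = 0 \<Longrightarrow> proj_sum q js b \<psi> = proj_sum q (remove1 j js) b \<psi>"
  unfolding proj_sum_def by (simp add: sum_list_map_remove1)

lemma cprod_head:
  assumes "\<forall>i\<in>set (j # l). lmap (q i) \<and> commute (q j) (q i)"
  shows "cprod q (j # l) \<psi> = cprod q l (compl (q j) \<psi>)"
proof -
  have "commute (cprod q l) (compl (q j))"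
    using assms by (intro commute_compl lmap_cprod commute_sym[OF commute_cprod]) auto
  then show ?thesis by (simp add: commute_def)
qed

lemma compl_sum_fixed:
  assumes "\<forall>i\<in>set (j # l). lmap (q i) \<and> commute (q j) (q i)" "q j \<psi> = \<psi>" "restr \<psi> = \<psi>"
  shows "compl_sum q (Ls1 @ (j # l) # Ls2) a \<psi> = compl_sum q (Ls1 @ Ls2) (1 + a) \<psi>"
proof -
  have lm: "lmap (cprod q l)" using assms(1) by (intro lmap_cprod) auto
  have "compl (q j) \<psi> = 0" using assms(2,3) by (simp add: compl_def)
  then have "cprod q (j # l) \<psi> = 0"
    by (simp only: cprod_head[OF assms(1)] lmap_zero[OF lm])
  then have "compl (cprod q (j # l)) \<psi> = \<psi>"
    by (simp only: compl_def assms(3) diff_zero)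
  then show ?thesis unfolding compl_sum_def using assms(3)
    by (simp add: smul_one_plus algebra_simps del: cprod.simps)
qed

lemma compl_sum_killed:
  assumes "\<forall>i\<in>set (j # l). lmap (q i) \<and> commute (q j) (q i)" "q j \<psi> = 0"
  shows "compl_sum q (Ls1 @ (j # l) # Ls2) a \<psi> = compl_sum q (Ls1 @ l # Ls2) a \<psi>"
proof -
  have lm: "lmap (cprod q l)" using assms(1) by (intro lmap_cprod) auto
  have "cprod q (j # l) \<psi> = cprod q l \<psi>"
    by (simp only: cprod_head[OF assms(1)] compl_def assms(2) diff_zero lmapD(3)[OF lm])
  then show ?thesis unfolding compl_sum_def by (simp add: compl_def del: cprod.simps)
qed

lemma compl_sum_split:
  assumes qs: "\<forall>i\<in>G. oproj (q i)" "\<forall>i\<in>G. \<forall>i'\<in>G. commute (q i) (q i')"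
    and sub: "set (concat Ls) \<subseteq> G" "set js \<subseteq> G" and j: "j \<in> G"
    and on_range: "nrm (compl_sum q Ls a (q j \<psi>)) \<le> nrm (proj_sum q js b (q j \<psi>))"
    and on_kernel: "nrm (compl_sum q Ls a (\<psi> - q j \<psi>)) \<le> nrm (proj_sum q js b (\<psi> - q j \<psi>))"
  shows "nrm (compl_sum q Ls a \<psi>) \<le> nrm (proj_sum q js b \<psi>)"
proof -
  have lmq: "\<forall>i\<in>G. lmap (q i)" using qs(1) by (auto simp: oproj_def)
  then have lmqj: "lmap (q j)" using j by auto
  have F: "lmap (compl_sum q Ls a)" using lmq sub by (intro lmap_compl_sum) auto
  have H: "lmap (proj_sum q js b)" using lmq sub by (intro lmap_proj_sum) auto
  have cF: "commute (q j) (compl_sum q Ls a)"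
    using lmq qs(2) sub j by (intro commute_compl_sum lmqj) auto
  have cH: "commute (q j) (proj_sum q js b)"
    using qs(2) sub j by (intro commute_proj_sum lmqj) auto
  show ?thesis
    using nrm_le_by_split[OF _ zero_le_one, of "q j" "compl_sum q Ls a" "proj_sum q js b" \<psi>]
      qs(1) j lmap_diff[OF F] lmap_diff[OF H] cF cH on_range on_kernel
    by (simp add: commute_def)
qed

lemma mset_concat_remove_head:
  assumes "mset (concat (Ls1 @ (j # l) # Ls2)) \<subseteq># mset js"
  shows "mset (concat (Ls1 @ l # Ls2)) \<subseteq># mset js - {#j#}"
    "mset (concat (Ls1 @ Ls2)) \<subseteq># mset js - {#j#}"
proof -
  have "add_mset j (mset (concat (Ls1 @ l # Ls2))) \<subseteq># mset js" using assms by simp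
  then show m: "mset (concat (Ls1 @ l # Ls2)) \<subseteq># mset js - {#j#}"
    by (rule insert_subset_eq_iff[THEN iffD1, THEN conjunct2])
  have "mset (concat (Ls1 @ Ls2)) \<subseteq># mset (concat (Ls1 @ l # Ls2))" by simp
  then show "mset (concat (Ls1 @ Ls2)) \<subseteq># mset js - {#j#}"
    using m by (rule subset_mset.order_trans)
qed

text \<open>Each step splits \<psi> along some q_j: if a list j # l of
  Ls remains, along its head (on the range of q_j that list contributes a full copy of \<psi>, on
  the kernel it shrinks to l); otherwise along any j in js.\<close>
lemma compl_sum_bound_gen:
  assumes qs: "\<forall>i\<in>G. oproj (q i)" "\<forall>i\<in>G. \<forall>i'\<in>G. commute (q i) (q i')"
  shows "set js \<subseteq> G \<Longrightarrow> mset (concat Ls) \<subseteq># mset js \<Longrightarrow> 0 \<le> a \<Longrightarrow> a \<le> b \<Longrightarrow>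
    nrm (compl_sum q Ls (of_real a) \<psi>) \<le> nrm (proj_sum q js (of_real b) \<psi>)"
proof (induction "length js" arbitrary: js Ls a b \<psi>)
  case 0
  then have "concat Ls = []" "js = []" by auto
  then have "\<forall>l\<in>set Ls. compl (cprod q l) \<psi> = 0" by (auto simp: compl_def fun_eq_iff)
  then have "compl_sum q Ls (of_real a) \<psi> = smul (of_real a) \<psi>"
    unfolding compl_sum_def by (simp add: map_idI cong: map_cong)
  then show ?case using \<open>js = []\<close> 0 nrm_nonneg
    by (simp add: proj_sum_def nrm_smul mult_right_mono)
next
  case (Suc n)
  have sub: "set (concat Ls) \<subseteq> set js" using Suc.prems(2) by (metis mset_subset_eqD set_mset_mset subsetI)
  note split = compl_sum_split[OF qs _ Suc.prems(1)]
  have IH: "nrm (compl_sum q Ls' (of_real a') \<phi>) \<le> nrm (proj_sum q (remove1 j js) (of_real b') \<phi>)"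
    if "j \<in> set js" "mset (concat Ls') \<subseteq># mset js - {#j#}" "0 \<le> a'" "a' \<le> b'" for j Ls' a' b' \<phi>
    using Suc.hyps(1)[of "remove1 j js" Ls' a' b' \<phi>] Suc.hyps(2) Suc.prems(1) that
      set_remove1_subset[of j js] by (simp add: length_remove1)
  have fixed: "q j (q j \<psi>) = q j \<psi>" "restr (q j \<psi>) = q j \<psi>" and killed: "q j (\<psi> - q j \<psi>) = 0"
    if "j \<in> set js" for j
    using oproj_parts qs(1) Suc.prems(1) that by blast+
  show ?case
  proof (cases "concat Ls = []")
    case True
    obtain j where j: "j \<in> set js" using Suc.hyps(2) by (cases js) auto
    have m: "mset (concat Ls) \<subseteq># mset js - {#j#}" unfolding True by simp
    show ?thesis
    proof (rule split)
      show "nrm (compl_sum q Ls (of_real a) (q j \<psi>)) \<le> nrm (proj_sum q js (of_real b) (q j \<psi>))"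
        using IH[OF j m, of a "b + 1" "q j \<psi>"] Suc.prems
          proj_sum_fixed[of j js q "q j \<psi>", OF j fixed[OF j]] by (simp add: add.commute)
      show "nrm (compl_sum q Ls (of_real a) (\<psi> - q j \<psi>)) \<le> nrm (proj_sum q js (of_real b) (\<psi> - q j \<psi>))"
        using IH[OF j m, of a b] Suc.prems
          proj_sum_killed[of j js q "\<psi> - q j \<psi>", OF j killed[OF j]] by simp
    qed (use sub j Suc.prems(1) in auto)
  next
    case False
    then obtain Ls1 j l Ls2 where Ls: "Ls = Ls1 @ (j # l) # Ls2"
      by (metis concat_eq_Nil_conv list.exhaust split_list)
    have j: "j \<in> set js" using sub Ls by auto
    have "set (j # l) \<subseteq> G" using sub Ls Suc.prems(1) by auto
    then have hd: "\<forall>i\<in>set (j # l). lmap (q i) \<and> commute (q j) (q i)"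
      using qs by (auto simp: oproj_def)
    note m = mset_concat_remove_head[OF Suc.prems(2)[unfolded Ls]]
    show ?thesis
    proof (rule split)
      show "nrm (compl_sum q Ls (of_real a) (q j \<psi>)) \<le> nrm (proj_sum q js (of_real b) (q j \<psi>))"
        using IH[OF j m(2), of "a + 1" "b + 1" "q j \<psi>"] Suc.prems
          proj_sum_fixed[of j js q "q j \<psi>", OF j fixed[OF j]]
          compl_sum_fixed[of j l q "q j \<psi>", OF hd fixed[OF j]]
        unfolding Ls by (simp add: add.commute)
      show "nrm (compl_sum q Ls (of_real a) (\<psi> - q j \<psi>)) \<le> nrm (proj_sum q js (of_real b) (\<psi> - q j \<psi>))"
        using IH[OF j m(1), of a b] Suc.prems
          proj_sum_killed[of j js q "\<psi> - q j \<psi>", OF j killed[OF j]]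
          compl_sum_killed[of j l q "\<psi> - q j \<psi>", OF hd killed[OF j]]
        unfolding Ls by simp
    qed (use sub j Suc.prems(1) in auto)
  qed
qed

lemma lmap_act: "lmap (act A)"
  unfolding lmap_def act_def opapp_def restr_def smul_def
  by (auto simp: fun_eq_iff algebra_simps sum.distrib sum_distrib_left)

lemma act_mul: "act (opmul d L A B) \<psi> = act A (act B \<psi>)"
  unfolding act_def opapp_def opmul_def restr_def
  by (auto simp: fun_eq_iff sum_distrib_left sum_distrib_right mult.assoc
      intro!: sum.swap[THEN trans] sum.cong)

lemma act_idop: "act idop \<psi> = restr \<psi>"
proof -
  have "(\<Sum>t\<in>S. idop s t * \<psi> t) = \<psi> s" if "s \<in> S" for s
  proof -
    have "(\<Sum>t\<in>S. idop s t * \<psi> t) = (\<Sum>t\<in>S. if s = t then \<psi> t else 0)"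
      by (rule sum.cong) (auto simp: idop_def)
    also have "\<dots> = \<psi> s" using that by (simp add: finite_cfgs)
    finally show ?thesis .
  qed
  then show ?thesis unfolding act_def opapp_def restr_def by auto
qed

lemma act_zeroop: "act zeroop \<psi> = 0"
  unfolding act_def opapp_def zeroop_def restr_def by (auto simp: fun_eq_iff)

lemma act_compl_op: "act (compl_op A) \<psi> = compl (act A) \<psi>"
proof -
  have "act (compl_op A) \<psi> = act idop \<psi> - act A \<psi>"
    unfolding act_def opapp_def compl_op_def restr_def
    by (auto simp: fun_eq_iff algebra_simps sum_subtractf)
  then show ?thesis by (simp add: act_idop compl_def)
qed

lemma act_opeq: "opeq d L A B \<Longrightarrow> act A \<psi> = act B \<psi>"
  unfolding act_def opapp_def opeq_def restr_def by (auto simp: fun_eq_iff)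

lemma nrm_act: "nrm (act A \<psi>) = nrm (opapp d L A \<psi>)"
  unfolding act_def by simp

lemma commute_act: "opeq d L (opmul d L A B) (opmul d L B A) \<Longrightarrow> commute (act A) (act B)"
  unfolding commute_def by (simp add: act_mul[symmetric] act_opeq)

lemma selfadj_act:
  assumes "hermitian d L A" shows "selfadj (act A)"
  unfolding selfadj_def
proof (intro allI)
  fix \<phi> \<psi>
  have left: "cnj (act A \<phi> s) * \<psi> s = (\<Sum>t\<in>S. cnj (A s t) * cnj (\<phi> t) * \<psi> s)" if "s \<in> S" for s
  proof -
    have "cnj (act A \<phi> s) = (\<Sum>t\<in>S. cnj (A s t) * cnj (\<phi> t))"
      using that unfolding act_def restr_def opapp_def by simp
    then show ?thesis by (simp add: sum_distrib_right)
  qed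
  have right: "cnj (\<phi> t) * act A \<psi> t = (\<Sum>s\<in>S. cnj (\<phi> t) * (A t s * \<psi> s))" if "t \<in> S" for t
  proof -
    have "act A \<psi> t = (\<Sum>s\<in>S. A t s * \<psi> s)"
      using that unfolding act_def restr_def opapp_def by simp
    then show ?thesis by (simp add: sum_distrib_left)
  qed
  have "inner (act A \<phi>) \<psi> = (\<Sum>s\<in>S. \<Sum>t\<in>S. cnj (A s t) * cnj (\<phi> t) * \<psi> s)"
    unfolding inner_def using left by (rule sum.cong[OF refl])
  also have "\<dots> = (\<Sum>t\<in>S. \<Sum>s\<in>S. cnj (A s t) * cnj (\<phi> t) * \<psi> s)"
    by (rule sum.swap)
  also have "\<dots> = (\<Sum>t\<in>S. \<Sum>s\<in>S. cnj (\<phi> t) * (A t s * \<psi> s))"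
  proof (intro sum.cong refl)
    fix t s assume "t \<in> S" "s \<in> S"
    then have "A t s = cnj (A s t)" using assms unfolding hermitian_def by blast
    then show "cnj (A s t) * cnj (\<phi> t) * \<psi> s = cnj (\<phi> t) * (A t s * \<psi> s)" by simp
  qed
  also have "\<dots> = inner \<phi> (act A \<psi>)"
    unfolding inner_def using right by (intro sum.cong[OF refl]) simp
  finally show "inner (act A \<phi>) \<psi> = inner \<phi> (act A \<psi>)" .
qed

lemma oproj_act: "projector d L A \<Longrightarrow> oproj (act A)"
  unfolding projector_def oproj_def idem_def by (simp add: lmap_act selfadj_act act_mul[symmetric] act_opeq)

lemma act_oprod_compl: "act (oprod d L (map (\<lambda>j. compl_op (Q j)) l)) \<psi> = cprod (\<lambda>j. act (Q j)) l \<psi>"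
proof (induction l arbitrary: \<psi>)
  case Nil
  then show ?case by (simp add: oprod_def act_idop)
next
  case (Cons j l)
  then show ?case by (simp add: oprod_def act_mul act_compl_op)
qed

text \<open>Operators supported on disjoint sets of sites commute.  In a product of such
  operators only one intermediate configuration contributes: s on the complement of X,
  t on X.\<close>
definition merge :: "(nat \<times> nat) set \<Rightarrow> cfg \<Rightarrow> cfg \<Rightarrow> cfg" where
  "merge X t s = (\<lambda>u. if u \<in> X then t u else s u)"

lemma merge_cfgs: "s \<in> S \<Longrightarrow> t \<in> S \<Longrightarrow> merge X t s \<in> S"
  unfolding cfgs_def merge_def by auto

lemma sum_single:
  assumes "finite A" "x \<in> A" "\<And>y. y \<in> A \<Longrightarrow> y \<noteq> x \<Longrightarrow> f y = (0::complex)"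
  shows "sum f A = f x"
  using assms by (simp add: sum.remove[OF assms(1,2)] sum.neutral)

lemma supported_off:
  "supported d L X A \<Longrightarrow> s \<in> S \<Longrightarrow> t \<in> S \<Longrightarrow> \<not> agree_off X s t \<Longrightarrow> A s t = 0"
  unfolding supported_def by blast

lemma supported_local:
  "supported d L X A \<Longrightarrow> s \<in> S \<Longrightarrow> t \<in> S \<Longrightarrow> s' \<in> S \<Longrightarrow> t' \<in> S \<Longrightarrow>
   agree_off X s t \<Longrightarrow> agree_off X s' t' \<Longrightarrow> (\<forall>u\<in>X. s u = s' u \<and> t u = t' u) \<Longrightarrow> A s t = A s' t'"
  unfolding supported_def by blast

lemma opmul_disjoint_entry:
  assumes A: "supported d L X A" and B: "supported d L Y B" and XY: "X \<inter> Y = {}"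
    and s: "s \<in> S" and t: "t \<in> S"
  shows "opmul d L A B s t = A s (merge X t s) * B (merge X t s) t"
  unfolding opmul_def
proof (rule sum_single[OF finite_cfgs merge_cfgs[OF s t]])
  fix m assume m: "m \<in> S" "m \<noteq> merge X t s"
  show "A s m * B m t = 0"
  proof (cases "agree_off X s m \<and> agree_off Y m t")
    case True
    then have "m = merge X t s"
      using XY unfolding merge_def agree_off_def by (intro ext) (metis disjoint_iff)
    with m(2) show ?thesis by simp
  next
    case False
    then show ?thesis using supported_off[OF A s m(1)] supported_off[OF B m(1) t] by auto
  qed
qed

lemma supported_disjoint_commute:
  assumes A: "supported d L X A" and B: "supported d L Y B" and XY: "X \<inter> Y = {}"
  shows "commute (act A) (act B)"
proof (rule commute_act, unfold opeq_def, intro ballI)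
  fix s t assume s: "s \<in> S" and t: "t \<in> S"
  define m1 where "m1 = merge X t s"
  define m2 where "m2 = merge Y t s"
  have m: "m1 \<in> S" "m2 \<in> S" unfolding m1_def m2_def using merge_cfgs[OF s t] by auto
  have AB: "opmul d L A B s t = A s m1 * B m1 t"
    unfolding m1_def by (rule opmul_disjoint_entry[OF A B XY s t])
  have BA: "opmul d L B A s t = B s m2 * A m2 t"
    unfolding m2_def by (rule opmul_disjoint_entry[OF B A _ s t]) (use XY in blast)
  show "opmul d L A B s t = opmul d L B A s t"
  proof (cases "\<forall>u. u \<notin> X \<and> u \<notin> Y \<longrightarrow> s u = t u")
    case True
    text \<open>s and t differ only on X and Y: both products use the same two local entries.\<close>
    have XY': "u \<in> X \<Longrightarrow> u \<notin> Y" for u using XY by blast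
    have "A s m1 = A m2 t"
    proof (rule supported_local[OF A s m(1) m(2) t])
      show "agree_off X s m1" unfolding agree_off_def m1_def merge_def by simp
      show "agree_off X m2 t" unfolding agree_off_def m2_def merge_def using True by simp
      show "\<forall>u\<in>X. s u = m2 u \<and> m1 u = t u" unfolding m1_def m2_def merge_def using XY' by simp
    qed
    moreover have "B m1 t = B s m2"
    proof (rule supported_local[OF B m(1) t s m(2)])
      show "agree_off Y s m2" unfolding agree_off_def m2_def merge_def by simp
      show "agree_off Y m1 t" unfolding agree_off_def m1_def merge_def using True by simp
      show "\<forall>u\<in>Y. m1 u = s u \<and> t u = m2 u" unfolding m1_def m2_def merge_def using XY' by auto
    qed
    ultimately show ?thesis using AB BA by simp
  next
    case False
    text \<open>s and t differ outside X and Y: both products vanish.\<close>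
    then obtain u where u: "u \<notin> X" "u \<notin> Y" "s u \<noteq> t u" by auto
    have "m1 u \<noteq> t u" "m2 u \<noteq> t u" using u by (simp_all add: m1_def m2_def merge_def)
    then have "\<not> agree_off Y m1 t" "\<not> agree_off X m2 t"
      using u(1,2) unfolding agree_off_def by blast+
    then have "B m1 t = 0" "A m2 t = 0"
      using supported_off[OF B m(1) t] supported_off[OF A m(2) t] by auto
    then show ?thesis using AB BA by simp
  qed
qed

lemma norm_bound_nonneg:
  assumes "S \<noteq> {}" "\<And>\<phi>. nrm (opapp d L A \<phi>) \<le> w * nrm \<phi>"
  shows "0 \<le> w"
proof -
  obtain s0 where s0: "s0 \<in> S" using assms(1) by blast
  define \<phi> :: vec where "\<phi> = (\<lambda>s. if s = s0 then 1 else 0)"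
  have "(\<Sum>s\<in>S. (cmod (\<phi> s))\<^sup>2) = (\<Sum>s\<in>S. if s = s0 then 1 else 0)"
    unfolding \<phi>_def by (intro sum.cong) auto
  also have "\<dots> = 1" using s0 finite_cfgs by simp
  finally have "nrm \<phi> = 1" unfolding vnorm_def by simp
  then show ?thesis using assms(2)[of \<phi>] nrm_nonneg[of "opapp d L A \<phi>"] by simp
qed

end

text \<open>Along one cycle Z_L the coordinate x is coloured by its residue modulo
  p = r + 2 inside the first \<open>L div p\<close> full blocks of length p, and by a private colour in
  the remaining partial block (for L < 2p every coordinate gets its own colour).  At most
  2p colours are used, and two distinct coordinates of the same colour are so far apart that
  the windows \<open>x - 1, \<dots>, x - 1 + (p - 1)\<close> (mod L) starting at them are disjoint.\<close>

definition coord_colour :: "nat \<Rightarrow> nat \<Rightarrow> nat \<Rightarrow> nat" where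
  "coord_colour L p x =
     (if L < 2 * p then x else if x < (L div p) * p then x mod p else p + (x - (L div p) * p))"

lemma coord_colour_lt: "x < L \<Longrightarrow> 0 < p \<Longrightarrow> coord_colour L p x < 2 * p"
proof -
  assume x: "x < L" and p: "0 < p"
  have "L - (L div p) * p < p" using p by (metis minus_div_mult_eq_mod mod_less_divisor)
  moreover have "x mod p < p" using p by simp
  ultimately show ?thesis using x unfolding coord_colour_def by (auto simp del: mod_less_divisor)
qed

lemma coord_colour_eq:
  assumes "2 * p \<le> L" "0 < p" "x \<noteq> x'" "coord_colour L p x = coord_colour L p x'"
  shows "x < (L div p) * p" "x' < (L div p) * p" "x mod p = x' mod p"
proof -
  define k where "k = L div p"
  have e: "coord_colour L p z = (if z < k * p then z mod p else p + (z - k * p))" for z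
    using assms(1) unfolding coord_colour_def k_def by simp
  have mx: "x mod p < p" "x' mod p < p" using assms(2) by simp_all
  have "x < k * p \<and> x' < k * p \<and> x mod p = x' mod p"
  proof (cases "x < k * p"; cases "x' < k * p")
    assume "x < k * p" "x' < k * p" then show ?thesis using assms(4) e[of x] e[of x'] by simp
  next
    assume "x < k * p" "\<not> x' < k * p" then show ?thesis using assms(4) e[of x] e[of x'] mx by simp
  next
    assume "\<not> x < k * p" "x' < k * p" then show ?thesis using assms(4) e[of x] e[of x'] mx by simp
  next
    assume "\<not> x < k * p" "\<not> x' < k * p" then show ?thesis using assms(3,4) e[of x] e[of x'] by simp
  qed
  then show "x < (L div p) * p" "x' < (L div p) * p" "x mod p = x' mod p" unfolding k_def by auto
qed

lemma same_residue_gap: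
  fixes x x' p k :: nat
  assumes "x < x'" "x mod p = x' mod p" "x' < k * p"
  shows "p + x \<le> x'" "x' + p \<le> x + k * p"
proof -
  have p: "0 < p" using assms(3) by (cases p) auto
  define m where "m = x' div p - x div p"
  have "x div p \<le> x' div p" using assms(1) by (simp add: div_le_mono)
  then have "p * (x div p) \<le> p * (x' div p)" by simp
  moreover have "p * m = p * (x' div p) - p * (x div p)" unfolding m_def by (simp add: diff_mult_distrib2)
  ultimately have eq: "x' = x + p * m"
    using assms(2) mult_div_mod_eq[of p x] mult_div_mod_eq[of p x'] by linarith
  then have "1 \<le> m" using assms(1) by (cases m) auto
  then show "p + x \<le> x'" using eq by (simp add: add_increasing2)
  have "x' div p < k" using assms(3) p by (simp add: div_less_iff_less_mult)
  then have "m + 1 \<le> k" unfolding m_def by linarith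
  then have "p * (m + 1) \<le> p * k" by (rule mult_le_mono2)
  then show "x' + p \<le> x + k * p" using eq by (simp add: algebra_simps)
qed

lemma mod_shift_neq:
  fixes a b c L :: nat
  assumes "a < b" "b < a + L"
  shows "(a + c) mod L \<noteq> (b + c) mod L"
proof
  assume "(a + c) mod L = (b + c) mod L"
  then have "L dvd (b + c) - (a + c)"
    using assms(1) mod_eq_dvd_iff_nat[of "a + c" "b + c" L] by simp
  then have "L dvd b - a" by simp
  moreover have "0 < b - a" "b - a < L" using assms by auto
  ultimately show False using nat_dvd_not_less by blast
qed

lemma windows_disjoint:
  assumes "2 * p \<le> L" "0 < p" "x \<noteq> x'" "coord_colour L p x = coord_colour L p x'" "i < p" "i' < p"
  shows "(x + L - 1 + i) mod L \<noteq> (x' + L - 1 + i') mod L"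
proof -
  have kp: "(L div p) * p \<le> L" by simp
  have far: "(a + L - 1 + j) mod L \<noteq> (a' + L - 1 + j') mod L"
    if "a < a'" "a mod p = a' mod p" "a' < (L div p) * p" "j < p" "j' < p" for a a' j j'
  proof -
    have "p + a \<le> a'" "a' + p \<le> a + (L div p) * p" using same_residue_gap that(1-3) by auto
    then have "a + j < a' + j'" "a' + j' < a + j + L" using that(4,5) kp by linarith+
    moreover have e: "a + L - 1 + j = a + j + (L - 1)" "a' + L - 1 + j' = a' + j' + (L - 1)"
      using assms(1,2) by linarith+
    ultimately show ?thesis unfolding e by (intro mod_shift_neq)
  qed
  have c: "x < (L div p) * p" "x' < (L div p) * p" "x mod p = x' mod p"
    using coord_colour_eq[OF assms(1-4)] by auto
  show ?thesis
  proof (cases "x < x'")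
    case True then show ?thesis using far[of x x' i i'] c assms(5,6) by simp
  next
    case False
    then have "x' < x" using assms(3) by simp
    then have "(x' + L - 1 + i') mod L \<noteq> (x + L - 1 + i) mod L" using far[of x' x i' i] c assms(5,6) by simp
    then show ?thesis by (rule not_sym)
  qed
qed

definition corner :: "nat \<Rightarrow> nat \<Rightarrow> (nat \<times> nat) set \<Rightarrow> nat \<times> nat" where
  "corner L r A = (SOME c. fst c < L \<and> snd c < L \<and> A = block L (fst c) (snd c) r)"

definition enlarged :: "nat \<Rightarrow> nat \<Rightarrow> (nat \<times> nat) set \<Rightarrow> (nat \<times> nat) set" where
  "enlarged L r A =
     block L ((fst (corner L r A) + L - 1) mod L) ((snd (corner L r A) + L - 1) mod L) (r + 2)"

definition square_colour :: "nat \<Rightarrow> nat \<Rightarrow> (nat \<times> nat) set \<Rightarrow> nat \<times> nat" where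
  "square_colour L r A =
     (coord_colour L (r + 2) (fst (corner L r A)), coord_colour L (r + 2) (snd (corner L r A)))"

lemma corner_spec:
  assumes "A \<in> squares L r"
  shows "fst (corner L r A) < L \<and> snd (corner L r A) < L \<and>
         A = block L (fst (corner L r A)) (snd (corner L r A)) r"
proof -
  obtain x y where "x < L" "y < L" "A = block L x y r" using assms unfolding squares_def by auto
  then have "\<exists>c. fst c < L \<and> snd c < L \<and> A = block L (fst c) (snd c) r"
    by (intro exI[of _ "(x,y)"]) auto
  then show ?thesis unfolding corner_def by (rule someI_ex)
qed

lemma mem_shifted_block:
  assumes "u \<in> block L ((x + L - 1) mod L) ((y + L - 1) mod L) p"
  shows "\<exists>i j. i < p \<and> j < p \<and> u = ((x + L - 1 + i) mod L, (y + L - 1 + j) mod L)"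
  using assms unfolding block_def by (auto simp: mod_add_left_eq)

lemma subset_enlarged:
  assumes L: "0 < L" and A: "A \<in> squares L r"
  shows "A \<subseteq> enlarged L r A"
proof
  fix u assume "u \<in> A"
  then obtain i j where ij: "i < r" "j < r"
    "u = ((fst (corner L r A) + i) mod L, (snd (corner L r A) + j) mod L)"
    using corner_spec[OF A] unfolding block_def by blast
  have shift: "((x + L - 1) mod L + (i + 1)) mod L = (x + i) mod L" for x i
  proof -
    have "((x + L - 1) mod L + (i + 1)) mod L = (x + L - 1 + (i + 1)) mod L" by (rule mod_add_left_eq)
    also have "x + L - 1 + (i + 1) = (x + i) + L" using L by simp
    finally show ?thesis by simp
  qed
  show "u \<in> enlarged L r A"
    unfolding enlarged_def block_def using ij shift
    by (intro CollectI exI[of _ "i + 1"] exI[of _ "j + 1"]) auto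
qed

lemma enlarged_disjoint:
  assumes A: "A \<in> squares L r" and A': "A' \<in> squares L r" and ne: "A \<noteq> A'"
    and c: "square_colour L r A = square_colour L r A'"
  shows "enlarged L r A \<inter> enlarged L r A' = {}"
proof (rule ccontr)
  define p where "p = r + 2"
  obtain x y where xy: "corner L r A = (x, y)" by (cases "corner L r A")
  obtain x' y' where xy': "corner L r A' = (x', y')" by (cases "corner L r A'")
  have dif: "x \<noteq> x' \<or> y \<noteq> y'" using ne corner_spec[OF A] corner_spec[OF A'] xy xy' by auto
  have cx: "coord_colour L p x = coord_colour L p x'" and cy: "coord_colour L p y = coord_colour L p y'"
    using c xy xy' unfolding square_colour_def p_def by auto
  have big: "2 * p \<le> L"
  proof (rule ccontr)
    assume "\<not> 2 * p \<le> L"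
    then show False using cx cy dif unfolding coord_colour_def by auto
  qed
  assume "enlarged L r A \<inter> enlarged L r A' \<noteq> {}"
  then obtain u where u: "u \<in> enlarged L r A" "u \<in> enlarged L r A'" by auto
  obtain i j where ij: "i < p" "j < p" "u = ((x + L - 1 + i) mod L, (y + L - 1 + j) mod L)"
    using mem_shifted_block[of u L x y p] u(1) xy unfolding enlarged_def p_def by auto
  obtain i' j' where ij': "i' < p" "j' < p" "u = ((x' + L - 1 + i') mod L, (y' + L - 1 + j') mod L)"
    using mem_shifted_block[of u L x' y' p] u(2) xy' unfolding enlarged_def p_def by auto
  have p: "0 < p" unfolding p_def by simp
  show False
  proof (cases "x \<noteq> x'")
    case True
    then show False using windows_disjoint[OF big p True cx ij(1) ij'(1)] ij(3) ij'(3) by simp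
  next
    case False
    then have "y \<noteq> y'" using dif by simp
    then show False using windows_disjoint[OF big p _ cy ij(2) ij'(2)] ij(3) ij'(3) by simp
  qed
qed

lemma square_colour_range:
  "A \<in> squares L r \<Longrightarrow> square_colour L r A \<in> {..<2 * (r + 2)} \<times> {..<2 * (r + 2)}"
  using corner_spec[of A L r] coord_colour_lt[of "fst (corner L r A)" L "r + 2"]
    coord_colour_lt[of "snd (corner L r A)" L "r + 2"]
  unfolding square_colour_def by auto

lemma finite_squares: "finite (squares L r)"
proof -
  have "squares L r = (\<lambda>(x, y). block L x y r) ` ({..<L} \<times> {..<L})"
    unfolding squares_def by auto
  then show ?thesis by simp
qed

lemma set_square_list: "set (square_list L r) = squares L r"
  unfolding square_list_def squares_def by force

lemma distinct_square_list: "distinct (square_list L r)"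
  unfolding square_list_def by simp

lemma square_nonempty: "0 < r \<Longrightarrow> A \<in> squares L r \<Longrightarrow> A \<noteq> {}"
  unfolding squares_def block_def by auto

locale tqo_perturbation = qudit_space +
  fixes Q :: "(nat \<times> nat) set \<Rightarrow> op" and Lstar r :: nat
    and V :: "(nat \<times> nat) set \<Rightarrow> op" and w :: real
  assumes L_pos: "0 < L"
    and frustration_free: "frustration_free_setup d L Q"
    and tqo2: "TQO2 d L Q Lstar"
    and r_range: "1 \<le> r" "r \<le> Lstar"
    and V_hermitian: "A \<in> squares L r \<Longrightarrow> hermitian d L (V A)"
    and V_supported: "A \<in> squares L r \<Longrightarrow> supported d L A (V A)"
    and V_ground: "A \<in> squares L r \<Longrightarrow> opeq d L (opmul d L (V A) (ground_proj d L Q)) zeroop"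
    and V_norm: "A \<in> squares L r \<Longrightarrow> vnorm d L (opapp d L (V A) \<phi>) \<le> w * vnorm d L \<phi>"
    and w_nonneg: "0 \<le> w"
begin

definition q :: "(nat \<times> nat) set \<Rightarrow> vec \<Rightarrow> vec" where "q j = act (Q j)"
definition inside :: "(nat \<times> nat) set \<Rightarrow> (nat \<times> nat) set list" where
  "inside A = filter (\<lambda>j. j \<subseteq> enlarged L r A) (square_list L 2)"
definition P :: "(nat \<times> nat) set \<Rightarrow> vec \<Rightarrow> vec" where "P A = cprod q (inside A)"
definition R :: "(nat \<times> nat) set \<Rightarrow> vec \<Rightarrow> vec" where "R A = compl (P A)"
definition colour_class :: "nat \<times> nat \<Rightarrow> (nat \<times> nat) set set" where
  "colour_class c = {A \<in> squares L r. square_colour L r A = c}"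

lemma q_oproj: "j \<in> squares L 2 \<Longrightarrow> oproj (q j)"
  using frustration_free unfolding frustration_free_setup_def q_def by (auto intro: oproj_act)

lemma q_commute: "i \<in> squares L 2 \<Longrightarrow> j \<in> squares L 2 \<Longrightarrow> commute (q i) (q j)"
  using frustration_free unfolding frustration_free_setup_def q_def by (auto intro: commute_act)

lemma inside_squares: "j \<in> set (inside A) \<Longrightarrow> j \<in> squares L 2"
  unfolding inside_def by (auto simp: set_square_list)

lemma P_oproj: "oproj (P A)"
  unfolding P_def using inside_squares q_oproj q_commute by (intro oproj_cprod) blast+

lemma lmap_P: "lmap (P A)" using P_oproj by (simp add: oproj_def)

lemma P_commute: "commute (P A) (P A')"
  unfolding P_def
proof (rule commute_cprod[OF lmap_P[unfolded P_def]], intro ballI conjI)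
  fix i assume i: "i \<in> set (inside A')"
  then show "lmap (q i)" using inside_squares q_oproj by (auto simp: oproj_def)
  have "commute (q i) (cprod q (inside A))"
    using inside_squares[OF i] inside_squares q_oproj q_commute
    by (intro commute_cprod) (auto simp: oproj_def)
  then show "commute (cprod q (inside A)) (q i)" by (rule commute_sym)
qed

lemma R_oproj: "oproj (R A)"
  unfolding R_def by (rule oproj_compl[OF P_oproj])

lemma R_commute: "commute (R A) (R A')"
proof -
  have "commute (P A') (R A)"
    unfolding R_def by (rule commute_compl[OF lmap_P commute_sym[OF P_commute]])
  then have "commute (R A) (P A')" by (rule commute_sym)
  moreover have "lmap (R A)" using R_oproj by (simp add: oproj_def)
  ultimately show ?thesis unfolding R_def[of A'] by (intro commute_compl)
qed

lemma act_local_proj: "act (local_proj d L Q (enlarged L r A)) \<phi> = P A \<phi>"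
  unfolding local_proj_def P_def inside_def q_def by (rule act_oprod_compl)

text \<open>TQO-2 applied to \<open>V_A P = 0\<close> gives \<open>V_A P_A = 0\<close>; by self-adjointness also \<open>P_A V_A = 0\<close>.\<close>
lemma V_P_zero:
  assumes A: "A \<in> squares L r"
  shows "act (V A) (P A \<phi>) = 0"
proof -
  obtain x y where xy: "x < L" "y < L" "A = block L x y r" "corner L r A = (x, y)"
    using corner_spec[OF A] by (metis prod.collapse)
  have "opeq d L (opmul d L (V A) (local_proj d L Q (enlarged L r A))) zeroop"
    using tqo2 r_range V_supported[OF A] V_ground[OF A] xy
    unfolding TQO2_def enlarged_def by auto
  then have "act (opmul d L (V A) (local_proj d L Q (enlarged L r A))) \<phi> = act zeroop \<phi>"
    by (rule act_opeq)
  then show ?thesis by (simp add: act_mul act_zeroop act_local_proj)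
qed

lemma P_V_zero: "A \<in> squares L r \<Longrightarrow> P A (act (V A) \<phi>) = 0"
  using selfadj_comp_zero[OF selfadj_act[OF V_hermitian] _ lmap_P V_P_zero] P_oproj
  by (simp add: oproj_def)

text \<open>Squares of one colour: their operators V_A commute with the other R_{A'}, because
  V_A lives on A and R_{A'} on B_{A'}, which is disjoint from \<open>B_A \<supseteq> A\<close>; and the lists
  of 2-squares inside their enlargements are disjoint.\<close>
lemma V_commute_R:
  assumes A: "A \<in> colour_class c" and A': "A' \<in> colour_class c" and ne: "A \<noteq> A'"
  shows "commute (act (V A)) (R A')"
proof -
  have AS: "A \<in> squares L r" and AS': "A' \<in> squares L r"
    and cc: "square_colour L r A = square_colour L r A'"
    using A A' unfolding colour_class_def by auto
  have disj: "A \<inter> j = {}" if "j \<in> set (inside A')" for j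
    using that enlarged_disjoint[OF AS AS' ne cc] subset_enlarged[OF L_pos AS]
    unfolding inside_def by auto
  have "commute (act (V A)) (P A')"
    unfolding P_def
  proof (rule commute_cprod[OF lmap_act], intro ballI conjI)
    fix j assume j: "j \<in> set (inside A')"
    then have jS: "j \<in> squares L 2" by (rule inside_squares)
    show "lmap (q j)" using q_oproj[OF jS] by (simp add: oproj_def)
    have "supported d L j (Q j)" using frustration_free jS unfolding frustration_free_setup_def by auto
    then show "commute (act (V A)) (q j)"
      unfolding q_def by (rule supported_disjoint_commute[OF V_supported[OF AS] _ disj[OF j]])
  qed
  then show ?thesis unfolding R_def by (rule commute_compl[OF lmap_act])
qed

lemma colour_class_dominated: "dominated_family w R (\<lambda>A. act (V A)) (colour_class c)"
proof -
  have sq: "A \<in> squares L r" if "A \<in> colour_class c" for A using that unfolding colour_class_def by auto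
  have "act (V A) (R A \<phi>) = act (V A) \<phi>" "R A (act (V A) \<phi>) = act (V A) \<phi>"
    if "A \<in> colour_class c" for A \<phi>
    using V_P_zero[OF sq[OF that]] P_V_zero[OF sq[OF that]]
    by (simp_all add: R_def compl_def lmap_diff lmapD(3,4) lmap_act)
  moreover have "nrm (act (V A) \<phi>) \<le> w * nrm \<phi>" if "A \<in> colour_class c" for A \<phi>
    using V_norm[OF sq[OF that]] by (simp add: nrm_act)
  ultimately show ?thesis
    unfolding dominated_family_def using R_oproj R_commute V_commute_R lmap_act by blast
qed

lemma inside_disjoint:
  assumes "A \<in> colour_class c" "A' \<in> colour_class c" "A \<noteq> A'"
  shows "set (inside A) \<inter> set (inside A') = {}"
proof -
  have "enlarged L r A \<inter> enlarged L r A' = {}"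
    using assms unfolding colour_class_def by (intro enlarged_disjoint) auto
  moreover have "j \<noteq> {}" if "j \<in> set (inside A)" for j
    using inside_squares[OF that] square_nonempty[of 2 j L] by auto
  ultimately show ?thesis unfolding inside_def by fastforce
qed

lemma finite_colour_class: "finite (colour_class c)"
  unfolding colour_class_def using finite_squares by simp

lemma distinct_concat_map:
  "distinct xs \<Longrightarrow> \<forall>x\<in>set xs. distinct (f x) \<Longrightarrow>
   \<forall>x\<in>set xs. \<forall>y\<in>set xs. x \<noteq> y \<longrightarrow> set (f x) \<inter> set (f y) = {} \<Longrightarrow> distinct (concat (map f xs))"
  by (induction xs) auto

lemma colour_class_R_bound:
  "nrm (\<Sum>A\<in>colour_class c. R A \<psi>) \<le> nrm (\<Sum>j\<in>squares L 2. q j \<psi>)"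
proof -
  obtain Ks where Ks: "distinct Ks" "set Ks = colour_class c"
    using finite_distinct_list[OF finite_colour_class] by blast
  define Ls where "Ls = map inside Ks"
  have dist: "distinct (concat Ls)"
    unfolding Ls_def using Ks inside_disjoint distinct_square_list
    by (intro distinct_concat_map) (auto simp: inside_def)
  have "mset (concat Ls) = mset_set (set (concat Ls))" by (rule mset_set_set[symmetric, OF dist])
  also have "\<dots> \<subseteq># mset_set (set (square_list L 2))"
    by (rule subset_imp_msubset_mset_set) (auto simp: Ls_def inside_def)
  also have "\<dots> = mset (square_list L 2)" by (simp add: mset_set_set distinct_square_list)
  finally have sub: "mset (concat Ls) \<subseteq># mset (square_list L 2)" .
  have lhs: "compl_sum q Ls 0 \<psi> = (\<Sum>A\<in>colour_class c. R A \<psi>)"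
    unfolding compl_sum_def Ls_def R_def P_def
    using sum_list_distinct_conv_sum_set[OF Ks(1), of "\<lambda>A. compl (cprod q (inside A)) \<psi>"] Ks(2)
    by (simp add: comp_def)
  have rhs: "proj_sum q (square_list L 2) 0 \<psi> = (\<Sum>j\<in>squares L 2. q j \<psi>)"
    unfolding proj_sum_def
    using sum_list_distinct_conv_sum_set[OF distinct_square_list, of "\<lambda>j. q j \<psi>"]
    by (simp add: set_square_list)
  have "nrm (compl_sum q Ls (of_real 0) \<psi>) \<le> nrm (proj_sum q (square_list L 2) (of_real 0) \<psi>)"
    using q_oproj q_commute sub by (intro compl_sum_bound_gen[of "squares L 2"]) (auto simp: set_square_list)
  then show ?thesis using lhs rhs by simp
qed

lemma colour_class_bound:
  "nrm (\<Sum>A\<in>colour_class c. act (V A) \<psi>) \<le> w * nrm (\<Sum>j\<in>squares L 2. q j \<psi>)"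
proof -
  have "nrm (\<Sum>A\<in>colour_class c. act (V A) \<psi>) \<le> w * nrm (\<Sum>A\<in>colour_class c. R A \<psi>)"
    by (rule dominated_sum_bound[OF finite_colour_class colour_class_dominated w_nonneg])
  also have "\<dots> \<le> w * nrm (\<Sum>j\<in>squares L 2. q j \<psi>)"
    by (rule mult_left_mono[OF colour_class_R_bound w_nonneg])
  finally show ?thesis .
qed

text \<open>Summing over the \<open>4(r+2)\<^sup>2 \<le> 36 r\<^sup>2\<close> colour classes.\<close>
lemma perturbation_bound:
  "nrm (\<Sum>A\<in>squares L r. act (V A) \<psi>) \<le> 36 * w * (real r)\<^sup>2 * nrm (\<Sum>j\<in>squares L 2. q j \<psi>)"
proof -
  define Cols where "Cols = {..<2 * (r + 2)} \<times> {..<2 * (r + 2)}"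
  define H where "H = nrm (\<Sum>j\<in>squares L 2. q j \<psi>)"
  have "square_colour L r ` squares L r \<subseteq> Cols"
    unfolding Cols_def using square_colour_range by blast
  then have "(\<Sum>A\<in>squares L r. act (V A) \<psi>) = (\<Sum>c\<in>Cols. \<Sum>A\<in>colour_class c. act (V A) \<psi>)"
    unfolding colour_class_def Cols_def by (intro sum.group[symmetric] finite_squares) auto
  then have "nrm (\<Sum>A\<in>squares L r. act (V A) \<psi>) \<le> (\<Sum>c\<in>Cols. nrm (\<Sum>A\<in>colour_class c. act (V A) \<psi>))"
    using nrm_sum by simp
  also have "\<dots> \<le> (\<Sum>c\<in>Cols. w * H)" unfolding H_def by (intro sum_mono colour_class_bound)
  also have "\<dots> = real (card Cols) * (w * H)" by simp
  also have "\<dots> \<le> 36 * (real r)\<^sup>2 * (w * H)"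
  proof (rule mult_right_mono)
    have "real (card Cols) = 4 * (real r + 2)\<^sup>2"
      unfolding Cols_def by (simp add: card_cartesian_product power2_eq_square algebra_simps)
    also have "\<dots> \<le> 4 * (3 * real r)\<^sup>2"
      using r_range by (intro mult_left_mono power_mono) auto
    also have "\<dots> = 36 * (real r)\<^sup>2" by (simp add: power_mult_distrib)
    finally show "real (card Cols) \<le> 36 * (real r)\<^sup>2" .
    show "0 \<le> w * H" unfolding H_def using w_nonneg nrm_nonneg by simp
  qed
  finally show ?thesis unfolding H_def by (simp add: algebra_simps)
qed

end

text \<open>The theorem with C = 36.  Apart from the trivial case of an empty configuration space
  (where all norms vanish), the hypotheses instantiate the locale \<open>tqo_perturbation\<close>.\<close>
theorem mainTheorem6:
  fixes d :: nat
  shows "\<exists>C::real. \<forall>(L::nat) (Lstar::nat) (Q :: (nat \<times> nat) set \<Rightarrow> op) (r::nat)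
            (V :: (nat \<times> nat) set \<Rightarrow> op) (w::real) (\<psi>::vec).
     0 < L \<longrightarrow>
     frustration_free_setup d L Q \<longrightarrow> TQO1 d L Q Lstar \<longrightarrow> TQO2 d L Q Lstar \<longrightarrow>
     1 \<le> r \<longrightarrow> r \<le> Lstar \<longrightarrow>
     (\<forall>A\<in>squares L r.
        hermitian d L (V A) \<and> supported d L A (V A) \<and>
        opeq d L (opmul d L (V A) (ground_proj d L Q)) zeroop \<and>
        opeq d L (opmul d L (ground_proj d L Q) (V A)) zeroop \<and>
        (\<forall>\<phi>. vnorm d L (opapp d L (V A) \<phi>) \<le> w * vnorm d L \<phi>)) \<longrightarrow>
     vnorm d L (\<lambda>s. \<Sum>A\<in>squares L r. opapp d L (V A) \<psi> s)
       \<le> C * w * (real r)\<^sup>2 * vnorm d L (H0app d L Q \<psi>)"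
proof (intro exI[of _ 36] allI impI)
  fix L Lstar :: nat and Q :: "(nat \<times> nat) set \<Rightarrow> op" and r :: nat
    and V :: "(nat \<times> nat) set \<Rightarrow> op" and w :: real and \<psi> :: vec
  assume L: "0 < L" and ff: "frustration_free_setup d L Q" and "TQO1 d L Q Lstar"
    and t2: "TQO2 d L Q Lstar" and r: "1 \<le> r" "r \<le> Lstar"
    and V: "\<forall>A\<in>squares L r. hermitian d L (V A) \<and> supported d L A (V A) \<and>
        opeq d L (opmul d L (V A) (ground_proj d L Q)) zeroop \<and>
        opeq d L (opmul d L (ground_proj d L Q) (V A)) zeroop \<and>
        (\<forall>\<phi>. vnorm d L (opapp d L (V A) \<phi>) \<le> w * vnorm d L \<phi>)"
  interpret qudit_space d L .
  show "vnorm d L (\<lambda>s. \<Sum>A\<in>squares L r. opapp d L (V A) \<psi> s)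
          \<le> 36 * w * (real r)\<^sup>2 * vnorm d L (H0app d L Q \<psi>)"
  proof (cases "S = {}")
    case True
    then show ?thesis by (simp add: vnorm_def)
  next
    case False
    have "block L 0 0 r \<in> squares L r" unfolding squares_def using L by auto
    then have "0 \<le> w" using V norm_bound_nonneg[OF False] by blast
    then interpret tqo_perturbation d L Q Lstar r V w
      using L ff t2 r V by unfold_locales auto
    have "vnorm d L (\<lambda>s. \<Sum>A\<in>squares L r. opapp d L (V A) \<psi> s) = nrm (\<Sum>A\<in>squares L r. act (V A) \<psi>)"
      by (rule nrm_cong) (simp add: sum_fun_apply act_def restr_def)
    moreover have "vnorm d L (H0app d L Q \<psi>) = nrm (\<Sum>j\<in>squares L 2. q j \<psi>)"
      unfolding H0app_def by (rule nrm_cong) (simp add: sum_fun_apply q_def act_def restr_def)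
    ultimately show ?thesis using perturbation_bound by simp
  qed
qed

end
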